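(* Let $F$ be any non-trivial finite group with trivial center (e.g. a non-abelian finite simple group). Then there exist an infinite compact Hausdorff space $X$ and two minimal free continuous actions $\widetilde{\alpha}$ and $\widetilde{\alpha}'$ of $\mathbb{Z}\times F$ on $X$ such that $\widetilde{\alpha}$ and $\widetilde{\alpha}'$ are continuously orbit equivalent but not conjugate.
   Context: Continuous orbit equivalence: two continuous actions $G\curvearrowright X$ and $K\curvearrowright Y$ on compact Hausdorff spaces are continuously orbit equivalent if there is a homeomorphism $\phi:X\to Y$ with inverse $\psi$ and continuous maps $a:G\times X\to K$, $b:K\times Y\to G$ such that $\phi(gx)=a(g,x)\phi(x)$ and $\psi(hy)=b(h,y)\psi(y)$ for all $g\in G$, $h\in K$, $x\in X$, $y\in Y$. Two actions $\alpha,\beta$ of the same group $G$ on $X$ are conjugate if there are a homeomorphism $\phi:X\to X$ and a group automorphism $\tau$ of $G$ with $\phi(\alpha_g x)=\beta_{\tau(g)}(\phi(x))$ for all $g\in G$, $x\in X$ (equivalently, the maps $a,b$ above can be taken to be group isomorphisms). *)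

theory Defs
  imports "HOL-Analysis.Analysis" "HOL-Algebra.Elementary_Groups"
begin

definition group_center :: "('g, 'm) monoid_scheme \<Rightarrow> 'g set" where
  "group_center G = {z \<in> carrier G. \<forall>g \<in> carrier G. z \<otimes>\<^bsub>G\<^esub> g = g \<otimes>\<^bsub>G\<^esub> z}"

definition continuous_action ::
  "('g, 'm) monoid_scheme \<Rightarrow> 'x topology \<Rightarrow> ('g \<Rightarrow> 'x \<Rightarrow> 'x) \<Rightarrow> bool" where
  "continuous_action G T \<alpha> \<longleftrightarrow> group G \<and>
     (\<forall>g \<in> carrier G. continuous_map T T (\<alpha> g)) \<and>
     (\<forall>x \<in> topspace T. \<alpha> \<one>\<^bsub>G\<^esub> x = x) \<and>
     (\<forall>g \<in> carrier G. \<forall>h \<in> carrier G. \<forall>x \<in> topspace T.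
        \<alpha> (g \<otimes>\<^bsub>G\<^esub> h) x = \<alpha> g (\<alpha> h x))"

definition free_action ::
  "('g, 'm) monoid_scheme \<Rightarrow> 'x topology \<Rightarrow> ('g \<Rightarrow> 'x \<Rightarrow> 'x) \<Rightarrow> bool" where
  "free_action G T \<alpha> \<longleftrightarrow>
     (\<forall>g \<in> carrier G. \<forall>x \<in> topspace T. \<alpha> g x = x \<longrightarrow> g = \<one>\<^bsub>G\<^esub>)"

definition minimal_action ::
  "('g, 'm) monoid_scheme \<Rightarrow> 'x topology \<Rightarrow> ('g \<Rightarrow> 'x \<Rightarrow> 'x) \<Rightarrow> bool" where
  "minimal_action G T \<alpha> \<longleftrightarrow>
     (\<forall>x \<in> topspace T. T closure_of ((\<lambda>g. \<alpha> g x) ` carrier G) = topspace T)"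

text \<open>Continuous orbit equivalence. Since the groups are discrete, continuity of
  the cocycle a : G \<times> X \<rightarrow> K means continuity of each a g : X \<rightarrow> K (discrete).\<close>
definition cont_orbit_equiv ::
  "('g, 'm) monoid_scheme \<Rightarrow> 'x topology \<Rightarrow> ('g \<Rightarrow> 'x \<Rightarrow> 'x) \<Rightarrow>
   ('k, 'n) monoid_scheme \<Rightarrow> 'y topology \<Rightarrow> ('k \<Rightarrow> 'y \<Rightarrow> 'y) \<Rightarrow> bool" where
  "cont_orbit_equiv G T \<alpha> K S \<beta> \<longleftrightarrow>
     (\<exists>\<phi> \<psi> a b. homeomorphic_maps T S \<phi> \<psi> \<and>
        (\<forall>g \<in> carrier G. continuous_map T (discrete_topology (carrier K)) (a g)) \<and>
        (\<forall>h \<in> carrier K. continuous_map S (discrete_topology (carrier G)) (b h)) \<and>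
        (\<forall>g \<in> carrier G. \<forall>x \<in> topspace T. \<phi> (\<alpha> g x) = \<beta> (a g x) (\<phi> x)) \<and>
        (\<forall>h \<in> carrier K. \<forall>y \<in> topspace S. \<psi> (\<beta> h y) = \<alpha> (b h y) (\<psi> y)))"

definition conjugate_actions ::
  "('g, 'm) monoid_scheme \<Rightarrow> 'x topology \<Rightarrow> ('g \<Rightarrow> 'x \<Rightarrow> 'x) \<Rightarrow> ('g \<Rightarrow> 'x \<Rightarrow> 'x) \<Rightarrow> bool" where
  "conjugate_actions G T \<alpha> \<beta> \<longleftrightarrow>
     (\<exists>\<phi> \<tau>. homeomorphic_map T T \<phi> \<and> \<tau> \<in> iso G G \<and>
        (\<forall>g \<in> carrier G. \<forall>x \<in> topspace T. \<phi> (\<alpha> g x) = \<beta> (\<tau> g) (\<phi> x)))"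

end

theory Submission
  imports Defs "HOL-Algebra.Multiplicative_Group" "HOL-Library.Nat_Bijection"
begin

text \<open>
  Take c \<noteq> 1 in F and q = |F| + 1, so that c^(q^K) = c for all K. On X = Z_q \<times> F, where Z_q
  are the q-adic integers, let Z \<times> F act by (n, f)(y, k) = (y + n, f k) and, twisted by c, by
  (n, f)(y, k) = (y + n, f k c^n). Both actions are free and minimal because the odometer
  y \<mapsto> y + 1 is and F acts simply transitively on itself. The identity of X is a continuous
  orbit equivalence: the cocycle relating the two actions depends only on the F-coordinate.

  A conjugacy \<phi>, \<tau> maps the centre Z \<times> 1 of Z \<times> F onto itself, so \<phi> carries the closed
  set Z_q \<times> {1}, which is invariant under the untwisted Z-action, to a closed set invariant under
  the twisted one. Since q^K \<rightarrow> 0 in Z_q while c^(q^K) = c, such a set is also invariant under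
  right multiplication of the F-coordinate by c. Writing \<phi>(0, 1) = (y, k), the point (y, k c)
  therefore equals \<phi> of some point of Z_q \<times> {1}, and it is the image of \<phi>(0, 1) under
  (0, k c k\<inverse>). The preimage of (0, k c k\<inverse>) under \<tau> then maps (0, 1) into Z_q \<times> {1},
  so it is central, and so is k c k\<inverse>: impossible as F has trivial centre.
\<close>

section \<open>Centres and automorphisms\<close>

lemma group_center_integer_group: "group_center integer_group = UNIV"
  by (auto simp: group_center_def)

lemma group_center_DirProd:
  assumes "monoid G" and "monoid H"
  shows "group_center (G \<times>\<times> H) = group_center G \<times> group_center H"
proof safe
  fix a b assume ab: "(a, b) \<in> group_center (G \<times>\<times> H)"
  then have a: "a \<in> carrier G" and b: "b \<in> carrier H"
    by (auto simp: group_center_def)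
  show "a \<in> group_center G"
    unfolding group_center_def
  proof (intro CollectI conjI ballI a)
    fix g assume "g \<in> carrier G"
    then have "(a, b) \<otimes>\<^bsub>G \<times>\<times> H\<^esub> (g, \<one>\<^bsub>H\<^esub>) = (g, \<one>\<^bsub>H\<^esub>) \<otimes>\<^bsub>G \<times>\<times> H\<^esub> (a, b)"
      using ab monoid.one_closed[OF assms(2)] by (auto simp: group_center_def)
    then show "a \<otimes>\<^bsub>G\<^esub> g = g \<otimes>\<^bsub>G\<^esub> a" by simp
  qed
  show "b \<in> group_center H"
    unfolding group_center_def
  proof (intro CollectI conjI ballI b)
    fix h assume "h \<in> carrier H"
    then have "(a, b) \<otimes>\<^bsub>G \<times>\<times> H\<^esub> (\<one>\<^bsub>G\<^esub>, h) = (\<one>\<^bsub>G\<^esub>, h) \<otimes>\<^bsub>G \<times>\<times> H\<^esub> (a, b)"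
      using ab monoid.one_closed[OF assms(1)] by (auto simp: group_center_def)
    then show "b \<otimes>\<^bsub>H\<^esub> h = h \<otimes>\<^bsub>H\<^esub> b" by simp
  qed
qed (auto simp: group_center_def)

lemma iso_group_center_iff:
  assumes G: "monoid G" and \<tau>: "\<tau> \<in> iso G H" and x: "x \<in> carrier G"
  shows "\<tau> x \<in> group_center H \<longleftrightarrow> x \<in> group_center G"
proof -
  have inj: "inj_on \<tau> (carrier G)" and surj: "\<tau> ` carrier G = carrier H" and hom: "\<tau> \<in> hom G H"
    using \<tau> by (auto simp: iso_def bij_betw_def)
  have "\<tau> x \<otimes>\<^bsub>H\<^esub> \<tau> g = \<tau> g \<otimes>\<^bsub>H\<^esub> \<tau> x \<longleftrightarrow> x \<otimes>\<^bsub>G\<^esub> g = g \<otimes>\<^bsub>G\<^esub> x"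
    if g: "g \<in> carrier G" for g
    using inj_on_eq_iff[OF inj] hom_mult[OF hom] monoid.m_closed[OF G] x g by metis
  then show ?thesis
    using x unfolding group_center_def surj[symmetric] by auto
qed

lemma iso_obtain_preimage:
  assumes "\<tau> \<in> iso G H" and "y \<in> carrier H"
  obtains x where "x \<in> carrier G" and "\<tau> x = y"
proof -
  have "y \<in> \<tau> ` carrier G"
    using assms by (simp add: iso_def bij_betw_def)
  then show ?thesis
    using that by blast
qed

lemma (in group) pow_Suc_order_power:
  assumes "x \<in> carrier G"
  shows "x [^] (Suc (order G) ^ K) = x"
proof (induction K)
  case (Suc K)
  have "x [^] (Suc (order G) ^ Suc K) = (x [^] (Suc (order G) ^ K)) [^] Suc (order G)"
    by (simp only: power_Suc2 nat_pow_pow[OF assms])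
  also have "\<dots> = x"
    using assms by (simp add: Suc.IH pow_order_eq_1 nat_pow_Suc2)
  finally show ?case .
qed (use assms in simp)

section \<open>Transport along homeomorphisms\<close>

lemma homeomorphic_maps_topspaceD:
  assumes "homeomorphic_maps S T e d"
  shows "\<And>x. x \<in> topspace S \<Longrightarrow> e x \<in> topspace T \<and> d (e x) = x"
    and "\<And>y. y \<in> topspace T \<Longrightarrow> d y \<in> topspace S \<and> e (d y) = y"
  using assms continuous_map_image_subset_topspace
  by (fastforce simp: homeomorphic_maps_def)+

lemma continuous_action_in_topspace:
  "continuous_action G S \<beta> \<Longrightarrow> g \<in> carrier G \<Longrightarrow> x \<in> topspace S \<Longrightarrow> \<beta> g x \<in> topspace S"
  unfolding continuous_action_def by (meson continuous_map_image_subset_topspace image_subset_iff)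

lemma infinite_topspace_transport:
  assumes "homeomorphic_maps S T e d" and "infinite (topspace S)"
  shows "infinite (topspace T)"
proof -
  have e: "homeomorphic_map S T e"
    using assms(1) homeomorphic_map_maps by blast
  show ?thesis
    using assms(2) homeomorphic_imp_injective_map[OF e] homeomorphic_imp_surjective_map[OF e]
    by (metis finite_image_iff)
qed

lemma continuous_action_transport:
  assumes h: "homeomorphic_maps S T e d" and \<beta>: "continuous_action G S \<beta>"
  shows "continuous_action G T (\<lambda>g x. e (\<beta> g (d x)))"
  unfolding continuous_action_def
proof (intro conjI ballI)
  show "group G"
    using \<beta> by (simp add: continuous_action_def)
  fix g assume g: "g \<in> carrier G"
  have "continuous_map T T (e \<circ> \<beta> g \<circ> d)"
    using h \<beta> g by (intro continuous_map_compose) (auto simp: homeomorphic_maps_def continuous_action_def)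
  then show "continuous_map T T (\<lambda>x. e (\<beta> g (d x)))"
    by (simp add: o_def)
next
  fix x assume "x \<in> topspace T"
  then show "e (\<beta> \<one>\<^bsub>G\<^esub> (d x)) = x"
    using \<beta> homeomorphic_maps_topspaceD[OF h] by (simp add: continuous_action_def)
next
  fix g g' x assume "g \<in> carrier G" "g' \<in> carrier G" "x \<in> topspace T"
  then show "e (\<beta> (g \<otimes>\<^bsub>G\<^esub> g') (d x)) = e (\<beta> g (d (e (\<beta> g' (d x)))))"
    using \<beta> homeomorphic_maps_topspaceD[OF h] continuous_action_in_topspace[OF \<beta>]
    by (simp add: continuous_action_def)
qed

lemma free_action_transport:
  assumes h: "homeomorphic_maps S T e d" and \<beta>: "continuous_action G S \<beta>" "free_action G S \<beta>"
  shows "free_action G T (\<lambda>g x. e (\<beta> g (d x)))"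
  unfolding free_action_def
proof (intro ballI impI)
  fix g x assume g: "g \<in> carrier G" and x: "x \<in> topspace T" and fixed: "e (\<beta> g (d x)) = x"
  have "\<beta> g (d x) = d x"
    using arg_cong[OF fixed, of d] homeomorphic_maps_topspaceD[OF h] continuous_action_in_topspace[OF \<beta>(1) g] x
    by metis
  then show "g = \<one>\<^bsub>G\<^esub>"
    using \<beta>(2) g homeomorphic_maps_topspaceD(2)[OF h x] unfolding free_action_def by blast
qed

lemma minimal_action_transport:
  assumes h: "homeomorphic_maps S T e d" and \<beta>: "continuous_action G S \<beta>" "minimal_action G S \<beta>"
  shows "minimal_action G T (\<lambda>g x. e (\<beta> g (d x)))"
  unfolding minimal_action_def
proof
  fix x assume x: "x \<in> topspace T"
  have e: "homeomorphic_map S T e"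
    using h homeomorphic_map_maps by blast
  have orbit: "(\<lambda>g. \<beta> g (d x)) ` carrier G \<subseteq> topspace S"
    using continuous_action_in_topspace[OF \<beta>(1)] homeomorphic_maps_topspaceD[OF h] x by blast
  have "T closure_of ((\<lambda>g. e (\<beta> g (d x))) ` carrier G) = e ` (S closure_of ((\<lambda>g. \<beta> g (d x)) ` carrier G))"
    using homeomorphic_map_closure_of[OF e orbit] by (simp add: image_image)
  also have "\<dots> = topspace T"
    using \<beta>(2) x homeomorphic_maps_topspaceD[OF h] homeomorphic_imp_surjective_map[OF e]
    by (simp add: minimal_action_def)
  finally show "T closure_of ((\<lambda>g. e (\<beta> g (d x))) ` carrier G) = topspace T" .
qed

lemma cont_orbit_equiv_transport:
  assumes h: "homeomorphic_maps S T e d"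
    and \<beta>: "continuous_action G S \<beta>" and \<gamma>: "continuous_action K S \<gamma>"
    and coe: "cont_orbit_equiv G S \<beta> K S \<gamma>"
  shows "cont_orbit_equiv G T (\<lambda>g x. e (\<beta> g (d x))) K T (\<lambda>k x. e (\<gamma> k (d x)))"
proof -
  obtain \<phi> \<psi> a b where \<phi>: "homeomorphic_maps S S \<phi> \<psi>"
    and a: "\<forall>g \<in> carrier G. continuous_map S (discrete_topology (carrier K)) (a g)"
    and b: "\<forall>k \<in> carrier K. continuous_map S (discrete_topology (carrier G)) (b k)"
    and \<phi>a: "\<forall>g \<in> carrier G. \<forall>x \<in> topspace S. \<phi> (\<beta> g x) = \<gamma> (a g x) (\<phi> x)"
    and \<psi>b: "\<forall>k \<in> carrier K. \<forall>y \<in> topspace S. \<psi> (\<gamma> k y) = \<beta> (b k y) (\<psi> y)"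
    using coe unfolding cont_orbit_equiv_def by blast
  have d: "continuous_map T S d" and hTS: "homeomorphic_maps T S d e"
    using h by (auto simp: homeomorphic_maps_def)
  have "homeomorphic_maps T T (e \<circ> \<phi> \<circ> d) (e \<circ> \<psi> \<circ> d)"
    using homeomorphic_maps_compose[OF conjI[OF homeomorphic_maps_compose[OF conjI[OF hTS \<phi>]] h]] by (simp add: o_assoc)
  moreover have "\<forall>g \<in> carrier G. continuous_map T (discrete_topology (carrier K)) (a g \<circ> d)"
    and "\<forall>k \<in> carrier K. continuous_map T (discrete_topology (carrier G)) (b k \<circ> d)"
    using a b continuous_map_compose[OF d] by blast+
  moreover have "\<forall>g \<in> carrier G. \<forall>x \<in> topspace T.
      (e \<circ> \<phi> \<circ> d) (e (\<beta> g (d x))) = e (\<gamma> ((a g \<circ> d) x) (d ((e \<circ> \<phi> \<circ> d) x)))"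
    and "\<forall>k \<in> carrier K. \<forall>y \<in> topspace T.
      (e \<circ> \<psi> \<circ> d) (e (\<gamma> k (d y))) = e (\<beta> ((b k \<circ> d) y) (d ((e \<circ> \<psi> \<circ> d) y)))"
    using \<phi>a \<psi>b homeomorphic_maps_topspaceD[OF h] homeomorphic_maps_topspaceD[OF \<phi>]
      continuous_action_in_topspace[OF \<beta>] continuous_action_in_topspace[OF \<gamma>]
    by simp_all
  ultimately show ?thesis
    unfolding cont_orbit_equiv_def
    by (intro exI[where x="e \<circ> \<phi> \<circ> d"] exI[where x="e \<circ> \<psi> \<circ> d"]
        exI[where x="\<lambda>g. a g \<circ> d"] exI[where x="\<lambda>k. b k \<circ> d"]) simp
qed

lemma conjugate_actions_transport_back:
  assumes h: "homeomorphic_maps S T e d" and \<gamma>: "continuous_action G S \<gamma>"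
    and conj: "conjugate_actions G T (\<lambda>g x. e (\<beta> g (d x))) (\<lambda>g x. e (\<gamma> g (d x)))"
  shows "conjugate_actions G S \<beta> \<gamma>"
proof -
  obtain \<phi> \<tau> where \<phi>: "homeomorphic_map T T \<phi>" and \<tau>: "\<tau> \<in> iso G G"
    and eq: "\<forall>g \<in> carrier G. \<forall>x \<in> topspace T. \<phi> (e (\<beta> g (d x))) = e (\<gamma> (\<tau> g) (d (\<phi> x)))"
    using conj unfolding conjugate_actions_def by blast
  have e: "homeomorphic_map S T e" and d: "homeomorphic_map T S d"
    using h homeomorphic_maps_sym homeomorphic_map_maps by blast+
  have \<tau>G: "\<tau> g \<in> carrier G" if "g \<in> carrier G" for g
    using \<tau> that by (auto simp: iso_def hom_def)
  have "homeomorphic_map S S (d \<circ> \<phi> \<circ> e)"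
    using homeomorphic_map_compose[OF homeomorphic_map_compose[OF e \<phi>] d] by (simp add: o_assoc)
  moreover have "(d \<circ> \<phi> \<circ> e) (\<beta> g x) = \<gamma> (\<tau> g) ((d \<circ> \<phi> \<circ> e) x)"
    if g: "g \<in> carrier G" and x: "x \<in> topspace S" for g x
  proof -
    have ex: "e x \<in> topspace T" and dex: "d (e x) = x"
      using homeomorphic_maps_topspaceD(1)[OF h x] by auto
    have "\<phi> (e x) \<in> topspace T"
      using ex homeomorphic_imp_continuous_map[OF \<phi>] continuous_map_image_subset_topspace by blast
    then have "d (\<phi> (e x)) \<in> topspace S"
      using homeomorphic_maps_topspaceD(2)[OF h] by blast
    then have "d (e (\<gamma> (\<tau> g) (d (\<phi> (e x))))) = \<gamma> (\<tau> g) (d (\<phi> (e x)))"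
      using homeomorphic_maps_topspaceD(1)[OF h] continuous_action_in_topspace[OF \<gamma> \<tau>G[OF g]] by blast
    then show ?thesis
      using eq g ex dex by force
  qed
  ultimately show ?thesis
    unfolding conjugate_actions_def using \<tau> by blast
qed

lemma inj_on_encode_into_bool_seq:
  assumes "finite B"
  obtains e :: "(nat \<Rightarrow> int) \<times> 'b \<Rightarrow> nat \<Rightarrow> bool" where "inj_on e (UNIV \<times> B)"
proof -
  obtain \<iota> :: "'b \<Rightarrow> nat" where \<iota>: "inj_on \<iota> B"
    using finite_imp_inj_to_nat_seg[OF assms] by blast
  define e :: "(nat \<Rightarrow> int) \<times> 'b \<Rightarrow> nat \<Rightarrow> bool" where
    "e = (\<lambda>(y, k) i. case prod_decode i of (a, b) \<Rightarrow>
            if a = 0 then b = \<iota> k else y (a - 1) = int_decode b)"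
  have "(y, k) = (y', k')" if k: "k \<in> B" "k' \<in> B" and eq: "e (y, k) = e (y', k')" for y k y' k'
  proof -
    have "e (y, k) (prod_encode (0, \<iota> k)) = e (y', k') (prod_encode (0, \<iota> k))"
      using eq by simp
    then have "k = k'"
      using \<iota> k by (simp add: e_def inj_on_eq_iff)
    moreover have "y = y'"
    proof
      fix j
      have "e (y, k) (prod_encode (Suc j, int_encode (y j))) = e (y', k') (prod_encode (Suc j, int_encode (y j)))"
        using eq by simp
      then show "y j = y' j"
        by (simp add: e_def int_encode_inverse)
    qed
    ultimately show ?thesis
      by simp
  qed
  then have "inj_on e (UNIV \<times> B)"
    unfolding inj_on_def by fast
  then show ?thesis
    by (rule that)
qed

lemma homeomorphic_maps_onto_image:
  assumes "inj_on e (topspace S)"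
  obtains T d where "homeomorphic_maps S T e d"
proof -
  define d where "d = inv_into (topspace S) e"
  define T where "T = pullback_topology (e ` topspace S) d S"
  have de: "\<And>x. x \<in> topspace S \<Longrightarrow> d (e x) = x"
    using assms by (simp add: d_def)
  have "continuous_map S T e"
    unfolding T_def
  proof (rule continuous_map_pullback')
    show "continuous_map S S (d \<circ> e)"
      by (rule continuous_map_eq[OF continuous_map_id]) (simp add: de)
  qed auto
  moreover have "continuous_map T S d"
    using continuous_map_pullback[OF continuous_map_id] by (simp add: T_def)
  moreover have "topspace T = e ` topspace S"
    using de by (auto simp: T_def topspace_pullback_topology)
  ultimately have "homeomorphic_maps S T e d"
    unfolding homeomorphic_maps_def using de by (auto simp: d_def f_inv_into_f)
  then show ?thesis
    by (rule that)
qed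

section \<open>The q-adic odometer\<close>

lemma limitin_discrete_topologyI:
  "l \<in> U \<Longrightarrow> eventually (\<lambda>x. f x = l) F \<Longrightarrow> limitin (discrete_topology U) f l F"
  unfolding limitin_def by (auto elim: eventually_mono)

locale odometer =
  fixes q :: nat
  assumes two_le_q: "2 \<le> q"
begin

text \<open>The q-adic integers, as compatible sequences of residues y k \<in> {0..<q^k}.\<close>

definition qadic :: "(nat \<Rightarrow> int) set" where
  "qadic = {y. \<forall>k. y k = y (Suc k) mod int q ^ k}"

definition qadic_topology :: "(nat \<Rightarrow> int) topology" where
  "qadic_topology = subtopology (product_topology (\<lambda>k. discrete_topology {0..<int q ^ k}) UNIV) qadic"

definition qadic_add :: "int \<Rightarrow> (nat \<Rightarrow> int) \<Rightarrow> nat \<Rightarrow> int" where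
  "qadic_add n y = (\<lambda>k. (y k + n) mod int q ^ k)"

lemma power_q_pos: "0 < int q ^ k"
  using two_le_q by simp

lemma qadic_eq: "y \<in> qadic \<Longrightarrow> y k = y (Suc k) mod int q ^ k"
  unfolding qadic_def by blast

lemma qadic_mod: "y \<in> qadic \<Longrightarrow> y k mod int q ^ k = y k"
  by (subst (1 2) qadic_eq[of y k]) simp_all

lemma qadic_range: "y \<in> qadic \<Longrightarrow> y k \<in> {0..<int q ^ k}"
  using power_q_pos[of k] by (subst qadic_eq[of y k]) simp_all

lemma qadic_restrict:
  assumes y: "y \<in> qadic" and "i \<le> K"
  shows "y i = y K mod int q ^ i"
  using \<open>i \<le> K\<close>
proof (induction K rule: dec_induct)
  case base
  then show ?case
    using qadic_mod[OF y] by simp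
next
  case (step n)
  have "y n = y (Suc n) mod int q ^ n"
    using y by (rule qadic_eq)
  then show ?case
    using step.IH mod_mod_cancel[OF le_imp_power_dvd[OF \<open>i \<le> n\<close>]] by metis
qed

lemma topspace_qadic_topology: "topspace qadic_topology = qadic"
  using qadic_range by (auto simp: qadic_topology_def PiE_UNIV_domain)

lemma zero_in_qadic: "(\<lambda>_. 0) \<in> qadic"
  by (simp add: qadic_def)

lemma qadic_add_in_qadic:
  assumes "y \<in> qadic"
  shows "qadic_add n y \<in> qadic"
  unfolding qadic_def mem_Collect_eq
proof
  fix k
  have "qadic_add n y k = (y (Suc k) mod int q ^ k + n) mod int q ^ k"
    unfolding qadic_add_def by (subst qadic_eq[OF assms, of k]) (rule refl)
  also have "\<dots> = qadic_add n y (Suc k) mod int q ^ k"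
    by (simp add: qadic_add_def mod_add_left_eq mod_mod_cancel le_imp_power_dvd)
  finally show "qadic_add n y k = qadic_add n y (Suc k) mod int q ^ k" .
qed

lemma qadic_add_0: "y \<in> qadic \<Longrightarrow> qadic_add 0 y = y"
  by (auto simp: qadic_add_def qadic_mod)

lemma qadic_add_add: "qadic_add n (qadic_add m y) = qadic_add (n + m) y"
  by (auto simp: qadic_add_def mod_add_left_eq mod_add_right_eq ac_simps)

lemma dvd_all_powers_imp_zero:
  assumes "\<And>k. int q ^ k dvd n"
  shows "n = 0"
proof (rule ccontr)
  assume "n \<noteq> 0"
  define k where "k = nat \<bar>n\<bar>"
  have "int k < int (2 ^ k)"
    by (simp only: of_nat_less_iff less_exp)
  also have "\<dots> \<le> int q ^ k"
    using two_le_q by (simp add: power_mono)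
  also have "\<dots> \<le> \<bar>n\<bar>"
    using dvd_imp_le_int[OF \<open>n \<noteq> 0\<close> assms] power_q_pos by (metis abs_of_pos)
  finally show False
    by (simp add: k_def)
qed

lemma qadic_add_eq_self_iff:
  assumes "y \<in> qadic"
  shows "qadic_add n y = y \<longleftrightarrow> n = 0"
proof
  assume fixed: "qadic_add n y = y"
  have "int q ^ k dvd n" for k
  proof -
    have "(y k + n) mod int q ^ k = y k mod int q ^ k"
      using fun_cong[OF fixed, of k] qadic_mod[OF assms] by (simp add: qadic_add_def)
    then show ?thesis
      by (simp add: mod_eq_dvd_iff)
  qed
  then show "n = 0"
    by (rule dvd_all_powers_imp_zero)
qed (simp add: qadic_add_0 assms)

lemma infinite_qadic: "infinite qadic"
proof
  assume fin: "finite qadic"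
  have "range (\<lambda>n. qadic_add n (\<lambda>_. 0)) \<subseteq> qadic"
    using qadic_add_in_qadic[OF zero_in_qadic] by blast
  then have "finite (range (\<lambda>n. qadic_add n (\<lambda>_. 0)))"
    using fin by (rule finite_subset)
  moreover have "inj (\<lambda>n. qadic_add n (\<lambda>_. 0))"
  proof (rule injI)
    fix n m assume eq: "qadic_add n (\<lambda>_. 0) = qadic_add m (\<lambda>_. 0)"
    have "int q ^ k dvd n - m" for k
      using fun_cong[OF eq, of k] by (simp add: qadic_add_def mod_eq_dvd_iff)
    then show "n = m"
      using dvd_all_powers_imp_zero[of "n - m"] by simp
  qed
  ultimately have "finite (UNIV :: int set)"
    by (rule finite_imageD)
  then show False
    by simp
qed

lemma continuous_map_qadic_coordinate:
  "continuous_map qadic_topology (discrete_topology {0..<int q ^ k}) (\<lambda>y. y k)"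
  unfolding qadic_topology_def
  by (rule continuous_map_from_subtopology)
    (use continuous_map_product_projection[of k UNIV "\<lambda>k. discrete_topology {0..<int q ^ k}"] in simp)

lemma continuous_map_qadic_add: "continuous_map qadic_topology qadic_topology (qadic_add n)"
proof -
  have "continuous_map qadic_topology (discrete_topology {0..<int q ^ k}) (\<lambda>y. qadic_add n y k)" for k
  proof -
    have "continuous_map (discrete_topology {0..<int q ^ k}) (discrete_topology {0..<int q ^ k})
            (\<lambda>v. (v + n) mod int q ^ k)"
      using power_q_pos[of k] by (simp add: Pi_iff)
    from continuous_map_compose[OF continuous_map_qadic_coordinate this] show ?thesis
      by (simp add: o_def qadic_add_def)
  qed
  moreover have "qadic_add n ` topspace qadic_topology \<subseteq> qadic"
    using qadic_add_in_qadic by (auto simp: topspace_qadic_topology)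
  ultimately show ?thesis
    unfolding qadic_topology_def continuous_map_in_subtopology continuous_map_componentwise_UNIV
    by (simp add: qadic_topology_def image_subset_iff Pi_iff)
qed

lemma closedin_qadic: "closedin (product_topology (\<lambda>k. discrete_topology {0..<int q ^ k}) UNIV) qadic"
proof -
  let ?P = "product_topology (\<lambda>k. discrete_topology {0..<int q ^ k}) UNIV"
  have coordinate: "continuous_map ?P (discrete_topology {0..<int q ^ k}) (\<lambda>y. y k)" for k
    using continuous_map_product_projection[of k UNIV "\<lambda>k. discrete_topology {0..<int q ^ k}"] by simp
  have "closedin ?P {y \<in> topspace ?P. y k = ((\<lambda>v. v mod int q ^ k) \<circ> (\<lambda>y. y (Suc k))) y}" for k
  proof (rule closedin_continuous_maps_eq[OF _ coordinate])
    have "continuous_map (discrete_topology {0..<int q ^ Suc k}) (discrete_topology {0..<int q ^ k})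
            (\<lambda>v. v mod int q ^ k)"
      using power_q_pos[of k] by (simp add: Pi_iff)
    then show "continuous_map ?P (discrete_topology {0..<int q ^ k}) ((\<lambda>v. v mod int q ^ k) \<circ> (\<lambda>y. y (Suc k)))"
      by (rule continuous_map_compose[OF coordinate])
  qed simp
  then have "closedin ?P (\<Inter>k. {y \<in> topspace ?P. y k = y (Suc k) mod int q ^ k})"
    by (simp add: closedin_INT)
  moreover have "qadic \<subseteq> topspace ?P"
    using qadic_range by (auto simp: PiE_UNIV_domain)
  then have "qadic = (\<Inter>k. {y \<in> topspace ?P. y k = y (Suc k) mod int q ^ k})"
    unfolding qadic_def by blast
  ultimately show ?thesis
    by simp
qed

lemma compact_space_qadic_topology: "compact_space qadic_topology"
  unfolding qadic_topology_def
  by (intro compact_space_subtopology closedin_compact_space closedin_qadic)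
    (simp add: compact_space_product_topology compact_space_discrete_topology)

lemma Hausdorff_space_qadic_topology: "Hausdorff_space qadic_topology"
  unfolding qadic_topology_def
  by (intro Hausdorff_space_subtopology) (simp add: Hausdorff_space_product_topology)

lemma limitin_qadic_topologyI:
  assumes "y \<in> qadic" and "\<And>n. f n \<in> qadic" and "\<And>i. eventually (\<lambda>n. f n i = y i) sequentially"
  shows "limitin qadic_topology f y sequentially"
  unfolding qadic_topology_def limitin_subtopology limitin_componentwise
  using assms qadic_range by (auto simp: PiE_UNIV_domain intro: limitin_discrete_topologyI)

lemma limitin_qadic_add_power:
  assumes "y \<in> qadic"
  shows "limitin qadic_topology (\<lambda>K. qadic_add (int q ^ K) y) y sequentially"
proof (rule limitin_qadic_topologyI[OF assms qadic_add_in_qadic[OF assms]])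
  fix i
  have "qadic_add (int q ^ K) y i = y i" if "i \<le> K" for K
    using le_imp_power_dvd[OF that, of "int q"] qadic_mod[OF assms]
    by (auto simp: qadic_add_def elim: dvdE)
  then show "eventually (\<lambda>K. qadic_add (int q ^ K) y i = y i) sequentially"
    by (auto simp: eventually_sequentially)
qed

lemma limitin_qadic_add_approx:
  assumes "y \<in> qadic" and "z \<in> qadic"
  shows "limitin qadic_topology (\<lambda>K. qadic_add (z K - y K) y) z sequentially"
proof (rule limitin_qadic_topologyI[OF assms(2) qadic_add_in_qadic[OF assms(1)]])
  fix i
  have "qadic_add (z K - y K) y i = z i" if "i \<le> K" for K
  proof -
    have "qadic_add (z K - y K) y i = (y K mod int q ^ i + (z K - y K)) mod int q ^ i"
      unfolding qadic_add_def by (subst qadic_restrict[OF assms(1) that]) (rule refl)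
    also have "\<dots> = z K mod int q ^ i"
      by (simp add: mod_add_left_eq)
    finally show ?thesis
      using qadic_restrict[OF assms(2) that] by simp
  qed
  then show "eventually (\<lambda>K. qadic_add (z K - y K) y i = z i) sequentially"
    by (auto simp: eventually_sequentially)
qed

end

section \<open>Twisted actions of Z \<times> F on Z_q \<times> F\<close>

locale twisted_odometer = odometer q + group F for q :: nat and F :: "('f, 'm) monoid_scheme"
begin

abbreviation ZF :: "(int \<times> 'f) monoid" where
  "ZF \<equiv> integer_group \<times>\<times> F"

definition X_top :: "((nat \<Rightarrow> int) \<times> 'f) topology" where
  "X_top = prod_topology qadic_topology (discrete_topology (carrier F))"

text \<open>twisted 1 and twisted c are the actions \<alpha> and \<alpha>' of the statement.\<close>

definition twisted :: "'f \<Rightarrow> int \<times> 'f \<Rightarrow> (nat \<Rightarrow> int) \<times> 'f \<Rightarrow> (nat \<Rightarrow> int) \<times> 'f" where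
  "twisted c g x = (qadic_add (fst g) (fst x), snd g \<otimes>\<^bsub>F\<^esub> snd x \<otimes>\<^bsub>F\<^esub> c [^]\<^bsub>F\<^esub> fst g)"

lemma topspace_X_top: "topspace X_top = qadic \<times> carrier F"
  by (simp add: X_top_def topspace_qadic_topology)

lemma group_ZF: "group ZF"
  by (intro DirProd_group group_integer_group is_group)

lemma continuous_map_X_top_snd:
  assumes "h \<in> carrier F \<rightarrow> topspace Z"
  shows "continuous_map X_top Z (\<lambda>x. h (snd x))"
proof -
  have "continuous_map (discrete_topology (carrier F)) Z h"
    using assms by simp
  from continuous_map_compose[OF continuous_map_snd this] show ?thesis
    by (simp add: X_top_def o_def)
qed

lemma continuous_action_twisted:
  assumes c: "c \<in> carrier F"
  shows "continuous_action ZF X_top (twisted c)"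
  unfolding continuous_action_def
proof (intro conjI ballI group_ZF)
  fix g assume g: "g \<in> carrier ZF"
  have "continuous_map X_top qadic_topology (qadic_add (fst g) \<circ> fst)"
    unfolding X_top_def by (rule continuous_map_compose[OF continuous_map_fst continuous_map_qadic_add])
  moreover have "continuous_map X_top (discrete_topology (carrier F)) (\<lambda>x. snd g \<otimes>\<^bsub>F\<^esub> snd x \<otimes>\<^bsub>F\<^esub> c [^]\<^bsub>F\<^esub> fst g)"
    using g c by (intro continuous_map_X_top_snd) auto
  ultimately show "continuous_map X_top X_top (twisted c g)"
    by (simp add: X_top_def continuous_map_pairwise o_def twisted_def[abs_def])
next
  fix x assume "x \<in> topspace X_top"
  then show "twisted c \<one>\<^bsub>ZF\<^esub> x = x"
    by (auto simp: topspace_X_top twisted_def qadic_add_0)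
next
  fix g h x assume "g \<in> carrier ZF" "h \<in> carrier ZF" "x \<in> topspace X_top"
  moreover have "c [^]\<^bsub>F\<^esub> m \<otimes>\<^bsub>F\<^esub> c [^]\<^bsub>F\<^esub> n = c [^]\<^bsub>F\<^esub> n \<otimes>\<^bsub>F\<^esub> c [^]\<^bsub>F\<^esub> m" for m n :: int
    using c by (metis int_pow_mult add.commute)
  ultimately show "twisted c (g \<otimes>\<^bsub>ZF\<^esub> h) x = twisted c g (twisted c h x)"
    using c by (auto simp: topspace_X_top twisted_def qadic_add_add m_assoc int_pow_mult)
qed

lemma free_action_twisted:
  assumes c: "c \<in> carrier F"
  shows "free_action ZF X_top (twisted c)"
  unfolding free_action_def
proof (clarify)
  fix n f y k assume "(n, f) \<in> carrier ZF" "(y, k) \<in> topspace X_top"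
    and fixed: "twisted c (n, f) (y, k) = (y, k)"
  then have y: "y \<in> qadic" and f: "f \<in> carrier F" and k: "k \<in> carrier F"
    by (auto simp: topspace_X_top)
  then have "n = 0"
    using fixed qadic_add_eq_self_iff[OF y] by (simp add: twisted_def)
  then have "f \<otimes>\<^bsub>F\<^esub> k = k"
    using fixed f k by (simp add: twisted_def)
  then show "(n, f) = \<one>\<^bsub>ZF\<^esub>"
    using f k \<open>n = 0\<close> by simp
qed

lemma minimal_action_twisted:
  assumes c: "c \<in> carrier F"
  shows "minimal_action ZF X_top (twisted c)"
  unfolding minimal_action_def
proof (intro ballI antisym[OF closure_of_subset_topspace] subsetI)
  fix x p assume "x \<in> topspace X_top" "p \<in> topspace X_top"
  then obtain y k z j where x: "x = (y, k)" and p: "p = (z, j)"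
    and yz: "y \<in> qadic" "z \<in> qadic" and kj: "k \<in> carrier F" "j \<in> carrier F"
    by (auto simp: topspace_X_top)
  let ?orbit = "(\<lambda>g. twisted c g x) ` carrier ZF"
  have "(qadic_add n y, j) \<in> ?orbit" for n
  proof
    show "(n, j \<otimes>\<^bsub>F\<^esub> inv\<^bsub>F\<^esub> (c [^]\<^bsub>F\<^esub> n) \<otimes>\<^bsub>F\<^esub> inv\<^bsub>F\<^esub> k) \<in> carrier ZF"
      using c kj by simp
    show "(qadic_add n y, j) = twisted c (n, j \<otimes>\<^bsub>F\<^esub> inv\<^bsub>F\<^esub> (c [^]\<^bsub>F\<^esub> n) \<otimes>\<^bsub>F\<^esub> inv\<^bsub>F\<^esub> k) x"
      using c kj by (simp add: twisted_def x m_assoc)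
  qed
  moreover have "?orbit \<subseteq> topspace X_top"
    using continuous_action_in_topspace[OF continuous_action_twisted[OF c] _ \<open>x \<in> topspace X_top\<close>] by blast
  ultimately have "(qadic_add (z K - y K) y, j) \<in> X_top closure_of ?orbit" for K
    using closure_of_subset by blast
  moreover have "limitin X_top (\<lambda>K. (qadic_add (z K - y K) y, j)) p sequentially"
    using limitin_qadic_add_approx[OF yz] kj p by (simp add: X_top_def limitin_pairwise o_def)
  ultimately show "p \<in> X_top closure_of ?orbit"
    by (intro limitin_closedin[where f="\<lambda>K. (qadic_add (z K - y K) y, j)"]) auto
qed

lemma twisted_cocycle:
  assumes c: "c \<in> carrier F" and d: "d \<in> carrier F"
  obtains a where "\<forall>g \<in> carrier ZF. continuous_map X_top (discrete_topology (carrier ZF)) (a g)"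
    and "\<forall>g \<in> carrier ZF. \<forall>x \<in> topspace X_top. twisted c g x = twisted d (a g x) x"
proof
  let ?a = "\<lambda>g x. (fst g, snd g \<otimes>\<^bsub>F\<^esub> snd x \<otimes>\<^bsub>F\<^esub> c [^]\<^bsub>F\<^esub> fst g \<otimes>\<^bsub>F\<^esub> inv\<^bsub>F\<^esub> (d [^]\<^bsub>F\<^esub> fst g) \<otimes>\<^bsub>F\<^esub> inv\<^bsub>F\<^esub> (snd x))"
  show "\<forall>g \<in> carrier ZF. continuous_map X_top (discrete_topology (carrier ZF)) (?a g)"
    using c d by (auto intro!: continuous_map_X_top_snd[where h="\<lambda>k. (_, _ \<otimes>\<^bsub>F\<^esub> k \<otimes>\<^bsub>F\<^esub> _ \<otimes>\<^bsub>F\<^esub> _ \<otimes>\<^bsub>F\<^esub> inv\<^bsub>F\<^esub> k)"])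
  show "\<forall>g \<in> carrier ZF. \<forall>x \<in> topspace X_top. twisted c g x = twisted d (?a g x) x"
    using c d by (auto simp: topspace_X_top twisted_def m_assoc)
qed

lemma cont_orbit_equiv_twisted:
  assumes "c \<in> carrier F" and "d \<in> carrier F"
  shows "cont_orbit_equiv ZF X_top (twisted c) ZF X_top (twisted d)"
proof -
  obtain a where "\<forall>g \<in> carrier ZF. continuous_map X_top (discrete_topology (carrier ZF)) (a g)"
    and "\<forall>g \<in> carrier ZF. \<forall>x \<in> topspace X_top. twisted c g x = twisted d (a g x) x"
    using twisted_cocycle[OF assms] .
  moreover obtain b where "\<forall>g \<in> carrier ZF. continuous_map X_top (discrete_topology (carrier ZF)) (b g)"
    and "\<forall>g \<in> carrier ZF. \<forall>x \<in> topspace X_top. twisted d g x = twisted c (b g x) x"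
    using twisted_cocycle[OF assms(2,1)] .
  ultimately show ?thesis
    unfolding cont_orbit_equiv_def using homeomorphic_maps_id[of X_top]
    by (intro exI[where x=id] exI[where x=a] exI[where x=b]) simp
qed

lemma compact_space_X_top: "finite (carrier F) \<Longrightarrow> compact_space X_top"
  by (simp add: X_top_def compact_space_prod_topology compact_space_qadic_topology
      compact_space_discrete_topology)

lemma Hausdorff_space_X_top: "Hausdorff_space X_top"
  by (simp add: X_top_def Hausdorff_space_prod_topology Hausdorff_space_qadic_topology)

lemma infinite_topspace_X_top: "infinite (topspace X_top)"
  using infinite_qadic finite_cartesian_productD1[of qadic "carrier F"]
  by (auto simp: topspace_X_top)

lemma homeomorphic_maps_X_top_bool_seq:
  assumes "finite (carrier F)"
  obtains T :: "(nat \<Rightarrow> bool) topology" and e d where "homeomorphic_maps X_top T e d"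
proof -
  obtain e :: "(nat \<Rightarrow> int) \<times> 'f \<Rightarrow> nat \<Rightarrow> bool" where "inj_on e (UNIV \<times> carrier F)"
    using inj_on_encode_into_bool_seq[OF assms] .
  then have "inj_on e (topspace X_top)"
    by (rule inj_on_subset) (auto simp: topspace_X_top)
  then show ?thesis
    using that homeomorphic_maps_onto_image by blast
qed

lemma group_center_ZF:
  assumes "group_center F = {\<one>\<^bsub>F\<^esub>}"
  shows "group_center ZF = UNIV \<times> {\<one>\<^bsub>F\<^esub>}"
  using group_center_DirProd[OF group.is_monoid[OF group_integer_group] is_monoid]
  by (simp add: assms group_center_integer_group)

lemma iso_ZF_snd_eq_one_iff:
  assumes "group_center F = {\<one>\<^bsub>F\<^esub>}" and \<tau>: "\<tau> \<in> iso ZF ZF" and g: "g \<in> carrier ZF"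
  shows "snd (\<tau> g) = \<one>\<^bsub>F\<^esub> \<longleftrightarrow> snd g = \<one>\<^bsub>F\<^esub>"
  using iso_group_center_iff[OF group.is_monoid[OF group_ZF] \<tau> g] group_center_ZF[OF assms(1)] g
  by (cases g, cases "\<tau> g") auto

text \<open>The subsequence of the Z-orbit along the times q^K converges to its starting point, while
  twisting multiplies the F-coordinate by c^(q^K) = c.\<close>

lemma closed_twisted_invariant_mult_right:
  assumes c: "c \<in> carrier F" and periodic: "\<And>K. c [^]\<^bsub>F\<^esub> (q ^ K) = c"
    and C: "closedin X_top C" and invariant: "\<And>n x. x \<in> C \<Longrightarrow> twisted c (n, \<one>\<^bsub>F\<^esub>) x \<in> C"
    and yk: "(y, k) \<in> C"
  shows "(y, k \<otimes>\<^bsub>F\<^esub> c) \<in> C"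
proof (rule limitin_closedin[OF _ C])
  have y: "y \<in> qadic" and k: "k \<in> carrier F"
    using closedin_subset[OF C] yk by (auto simp: topspace_X_top)
  show "limitin X_top (\<lambda>K. (qadic_add (int q ^ K) y, k \<otimes>\<^bsub>F\<^esub> c)) (y, k \<otimes>\<^bsub>F\<^esub> c) sequentially"
    using limitin_qadic_add_power[OF y] k c by (simp add: X_top_def limitin_pairwise o_def)
  have "c [^]\<^bsub>F\<^esub> (int q ^ K) = c" for K
    using periodic[of K] int_pow_int[where G=F and x=c and n="q ^ K"] by simp
  then have "(qadic_add (int q ^ K) y, k \<otimes>\<^bsub>F\<^esub> c) = twisted c (int q ^ K, \<one>\<^bsub>F\<^esub>) (y, k)" for K
    using k c by (simp add: twisted_def)
  then show "\<forall>\<^sub>F K in sequentially. (qadic_add (int q ^ K) y, k \<otimes>\<^bsub>F\<^esub> c) \<in> C"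
    using invariant[OF yk] by simp
qed simp

lemma conjugacy_image_invariant:
  assumes centerless: "group_center F = {\<one>\<^bsub>F\<^esub>}" and \<tau>: "\<tau> \<in> iso ZF ZF"
    and eq: "\<forall>g \<in> carrier ZF. \<forall>x \<in> topspace X_top. \<phi> (twisted \<one>\<^bsub>F\<^esub> g x) = twisted c (\<tau> g) (\<phi> x)"
    and v: "v \<in> \<phi> ` (qadic \<times> {\<one>\<^bsub>F\<^esub>})"
  shows "twisted c (n, \<one>\<^bsub>F\<^esub>) v \<in> \<phi> ` (qadic \<times> {\<one>\<^bsub>F\<^esub>})"
proof -
  obtain y where y: "y \<in> qadic" and v: "v = \<phi> (y, \<one>\<^bsub>F\<^esub>)"
    using v by blast
  obtain g where g: "g \<in> carrier ZF" "\<tau> g = (n, \<one>\<^bsub>F\<^esub>)"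
    using iso_obtain_preimage[OF \<tau>, of "(n, \<one>\<^bsub>F\<^esub>)"] by auto
  then have "snd g = \<one>\<^bsub>F\<^esub>"
    using iso_ZF_snd_eq_one_iff[OF centerless \<tau> g(1)] by simp
  then have "twisted \<one>\<^bsub>F\<^esub> g (y, \<one>\<^bsub>F\<^esub>) = (qadic_add (fst g) y, \<one>\<^bsub>F\<^esub>)"
    by (simp add: twisted_def)
  moreover have "(y, \<one>\<^bsub>F\<^esub>) \<in> topspace X_top"
    using y by (simp add: topspace_X_top)
  then have "\<phi> (twisted \<one>\<^bsub>F\<^esub> g (y, \<one>\<^bsub>F\<^esub>)) = twisted c (n, \<one>\<^bsub>F\<^esub>) v"
    using eq g v by auto
  ultimately show ?thesis
    using qadic_add_in_qadic[OF y] by (metis SigmaI image_eqI singletonI)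
qed

lemma not_conjugate_twisted:
  assumes centerless: "group_center F = {\<one>\<^bsub>F\<^esub>}"
    and c: "c \<in> carrier F" "c \<noteq> \<one>\<^bsub>F\<^esub>" and periodic: "\<And>K. c [^]\<^bsub>F\<^esub> (q ^ K) = c"
  shows "\<not> conjugate_actions ZF X_top (twisted \<one>\<^bsub>F\<^esub>) (twisted c)"
proof
  assume "conjugate_actions ZF X_top (twisted \<one>\<^bsub>F\<^esub>) (twisted c)"
  then obtain \<phi> \<tau> where \<phi>: "homeomorphic_map X_top X_top \<phi>" and \<tau>: "\<tau> \<in> iso ZF ZF"
    and eq: "\<forall>g \<in> carrier ZF. \<forall>x \<in> topspace X_top. \<phi> (twisted \<one>\<^bsub>F\<^esub> g x) = twisted c (\<tau> g) (\<phi> x)"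
    unfolding conjugate_actions_def by blast
  define U where "U = qadic \<times> {\<one>\<^bsub>F\<^esub>}"
  have U: "U \<subseteq> topspace X_top"
    by (auto simp: U_def topspace_X_top)
  have U_closed: "closedin X_top (\<phi> ` U)"
    using homeomorphic_map_closedness[OF \<phi> U] closedin_topspace[of qadic_topology]
    by (simp add: U_def X_top_def closedin_prod_Times_iff topspace_qadic_topology)
  define u0 where "u0 = ((\<lambda>_::nat. 0::int), \<one>\<^bsub>F\<^esub>)"
  have u0: "u0 \<in> U"
    by (simp add: u0_def U_def zero_in_qadic)
  obtain y k where yk: "\<phi> u0 = (y, k)"
    by (metis surj_pair)
  have "\<phi> u0 \<in> topspace X_top"
    using homeomorphic_imp_continuous_map[OF \<phi>] continuous_map_image_subset_topspace u0 U by blast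
  then have y: "y \<in> qadic" and k: "k \<in> carrier F"
    using yk by (auto simp: topspace_X_top)
  have "(y, k) \<in> \<phi> ` U"
    using u0 yk by (metis image_eqI)
  then have "(y, k \<otimes>\<^bsub>F\<^esub> c) \<in> \<phi> ` U"
    using closed_twisted_invariant_mult_right[OF c(1) periodic U_closed]
      conjugacy_image_invariant[OF centerless \<tau> eq] by (simp add: U_def)
  then obtain u1 where u1: "u1 \<in> U" "\<phi> u1 = (y, k \<otimes>\<^bsub>F\<^esub> c)"
    by (metis imageE)
  define h where "h = k \<otimes>\<^bsub>F\<^esub> c \<otimes>\<^bsub>F\<^esub> inv\<^bsub>F\<^esub> k"
  have h: "h \<in> carrier F" "h \<otimes>\<^bsub>F\<^esub> k = k \<otimes>\<^bsub>F\<^esub> c"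
    using k c by (simp_all add: h_def m_assoc)
  obtain g where g: "g \<in> carrier ZF" "\<tau> g = (0, h)"
    using iso_obtain_preimage[OF \<tau>, of "(0, h)"] h(1) by auto
  have "\<phi> (twisted \<one>\<^bsub>F\<^esub> g u0) = twisted c (0, h) (y, k)"
    using eq g u0 U yk by auto
  also have "\<dots> = \<phi> u1"
    using h k y u1 c by (simp add: twisted_def qadic_add_0)
  finally have "twisted \<one>\<^bsub>F\<^esub> g u0 = u1"
    using homeomorphic_imp_injective_map[OF \<phi>] u1 U u0
      continuous_action_in_topspace[OF continuous_action_twisted[OF one_closed] g(1)]
    by (meson inj_onD subsetD)
  then have "snd g = \<one>\<^bsub>F\<^esub>"
    using u1 g by (auto simp: U_def u0_def twisted_def)
  then have "h = \<one>\<^bsub>F\<^esub>"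
    using iso_ZF_snd_eq_one_iff[OF centerless \<tau> g(1)] g(2) by simp
  then show False
    using h k c by simp
qed

end

theorem theorem1p1:
  fixes F :: "('f, 'm) monoid_scheme"
  assumes "group F"
    and "finite (carrier F)"
    and "carrier F \<noteq> {\<one>\<^bsub>F\<^esub>}"
    and "group_center F = {\<one>\<^bsub>F\<^esub>}"
  shows "\<exists>(T :: (nat \<Rightarrow> bool) topology) \<alpha> \<alpha>'.
           infinite (topspace T) \<and> compact_space T \<and> Hausdorff_space T \<and>
           continuous_action (integer_group \<times>\<times> F) T \<alpha> \<and>
           continuous_action (integer_group \<times>\<times> F) T \<alpha>' \<and>
           free_action (integer_group \<times>\<times> F) T \<alpha> \<and>
           free_action (integer_group \<times>\<times> F) T \<alpha>' \<and>
           minimal_action (integer_group \<times>\<times> F) T \<alpha> \<and>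
           minimal_action (integer_group \<times>\<times> F) T \<alpha>' \<and>
           cont_orbit_equiv (integer_group \<times>\<times> F) T \<alpha> (integer_group \<times>\<times> F) T \<alpha>' \<and>
           \<not> conjugate_actions (integer_group \<times>\<times> F) T \<alpha> \<alpha>'"
proof -
  interpret F: group F
    by (rule assms(1))
  have one: "\<one>\<^bsub>F\<^esub> \<in> carrier F"
    by simp
  obtain c where c: "c \<in> carrier F" "c \<noteq> \<one>\<^bsub>F\<^esub>"
    using assms(3) one by blast
  interpret twisted_odometer "Suc (order F)" F
    using assms(2) c(1) by unfold_locales (auto simp: order_def Suc_le_eq card_gt_0_iff)
  obtain T :: "(nat \<Rightarrow> bool) topology" and e d where h: "homeomorphic_maps X_top T e d"
    using homeomorphic_maps_X_top_bool_seq[OF assms(2)] .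
  let ?\<alpha> = "\<lambda>g x. e (twisted \<one>\<^bsub>F\<^esub> g (d x))" and ?\<alpha>' = "\<lambda>g x. e (twisted c g (d x))"
  have "\<not> conjugate_actions ZF T ?\<alpha> ?\<alpha>'"
    using conjugate_actions_transport_back[OF h continuous_action_twisted[OF c(1)]]
      not_conjugate_twisted[OF assms(4) c F.pow_Suc_order_power[OF c(1)]] by blast
  moreover have "infinite (topspace T)" "compact_space T" "Hausdorff_space T"
    using infinite_topspace_transport[OF h infinite_topspace_X_top] h homeomorphic_space_def
      homeomorphic_compact_space homeomorphic_Hausdorff_space compact_space_X_top[OF assms(2)]
      Hausdorff_space_X_top by blast+
  moreover have "continuous_action ZF T ?\<alpha>" "continuous_action ZF T ?\<alpha>'"
    by (rule continuous_action_transport[OF h continuous_action_twisted], fact)+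
  moreover have "free_action ZF T ?\<alpha>" "free_action ZF T ?\<alpha>'"
    by (rule free_action_transport[OF h continuous_action_twisted free_action_twisted], fact+)+
  moreover have "minimal_action ZF T ?\<alpha>" "minimal_action ZF T ?\<alpha>'"
    by (rule minimal_action_transport[OF h continuous_action_twisted minimal_action_twisted], fact+)+
  moreover have "cont_orbit_equiv ZF T ?\<alpha> ZF T ?\<alpha>'"
    by (rule cont_orbit_equiv_transport[OF h continuous_action_twisted continuous_action_twisted
        cont_orbit_equiv_twisted], fact+)
  ultimately show ?thesis
    by blast
qed

end
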